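(* If $\delta>0$, $k=k_N=O(N^{1/2-\delta})$, and $p\ge1$ is an integer, then there is $C_p$ (independent of $N$) such that $$\max_{\ell,\ell'=1}^k\mathbb E\Big[\big\langle\boldsymbol\Delta^{(2)}_\ell-\widetilde{\boldsymbol\Delta}_\ell,\boldsymbol\Delta^{(2)}_{\ell'}-\widetilde{\boldsymbol\Delta}_{\ell'}\big\rangle^{2p}\Big]\le C_p\Big(\frac{k}{\sqrt N}\Big)^{4p}\le C_pN^{-4p\delta}.$$
   Context: Let $\mathbf{y}_1,\dots,\mathbf{y}_N$ be i.i.d. $\mathcal N(0,\mathrm{Id}_N)$ vectors in $\mathbb R^N$. Let $\mathbf w_1=\mathbf y_1$, $\mathbf w_i=\mathbf y_i-\sum_{j<i}\frac{\langle\mathbf y_i,\mathbf w_j\rangle}{\|\mathbf w_j\|^2}\mathbf w_j$, $\boldsymbol\gamma_i=\mathbf w_i/\|\mathbf w_i\|$, $\boldsymbol\Delta_1=0$, $\boldsymbol\Delta_i=\sum_{\ell<i}\langle\mathbf y_i,\boldsymbol\gamma_\ell\rangle\boldsymbol\gamma_\ell$, $\widetilde{\boldsymbol\Delta}_i=\frac1N\sum_{\ell<i}\langle\mathbf y_i,\mathbf y_\ell\rangle\mathbf y_\ell$, and $\boldsymbol\Delta^{(2)}_i=\frac1N\sum_{\ell<i}\langle\mathbf y_i,\mathbf y_\ell-\boldsymbol\Delta_\ell\rangle\mathbf y_\ell$ (empty sums are $0$). *)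

theory Defs
  imports "HOL-Probability.Probability" "HOL-Library.Landau_Symbols"
begin

text \<open>Vectors in R^N are functions nat => real, coordinates indexed by {1..N}.
  A sample point omega :: nat * nat => real encodes the Gaussian matrix:
  the i-th vector y_i has j-th coordinate omega (i, j), for i, j in {1..N}.\<close>

definition ip :: "nat \<Rightarrow> (nat \<Rightarrow> real) \<Rightarrow> (nat \<Rightarrow> real) \<Rightarrow> real" where
  "ip N u v = (\<Sum>j\<in>{1..N}. u j * v j)"

definition yv :: "(nat \<times> nat \<Rightarrow> real) \<Rightarrow> nat \<Rightarrow> nat \<Rightarrow> real" where
  "yv \<omega> i = (\<lambda>j. \<omega> (i, j))"

definition gauss_space :: "nat \<Rightarrow> (nat \<times> nat \<Rightarrow> real) measure" where
  "gauss_space N = PiM ({1..N} \<times> {1..N}) (\<lambda>_. std_normal_distribution)"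

fun GS :: "nat \<Rightarrow> (nat \<Rightarrow> nat \<Rightarrow> real) \<Rightarrow> nat \<Rightarrow> (nat \<Rightarrow> real) list" where
  "GS N y 0 = []"
| "GS N y (Suc i) = GS N y i @
     [(\<lambda>j. y (Suc i) j - (\<Sum>u\<leftarrow>GS N y i. ip N (y (Suc i)) u / ip N u u * u j))]"

definition wv :: "nat \<Rightarrow> (nat \<Rightarrow> nat \<Rightarrow> real) \<Rightarrow> nat \<Rightarrow> nat \<Rightarrow> real" where
  "wv N y i = GS N y i ! (i - 1)"

definition gammav :: "nat \<Rightarrow> (nat \<Rightarrow> nat \<Rightarrow> real) \<Rightarrow> nat \<Rightarrow> nat \<Rightarrow> real" where
  "gammav N y i = (\<lambda>j. wv N y i j / sqrt (ip N (wv N y i) (wv N y i)))"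

definition Delta :: "nat \<Rightarrow> (nat \<Rightarrow> nat \<Rightarrow> real) \<Rightarrow> nat \<Rightarrow> nat \<Rightarrow> real" where
  "Delta N y i = (\<lambda>j. \<Sum>l\<in>{1..<i}. ip N (y i) (gammav N y l) * gammav N y l j)"

definition Delta_tilde :: "nat \<Rightarrow> (nat \<Rightarrow> nat \<Rightarrow> real) \<Rightarrow> nat \<Rightarrow> nat \<Rightarrow> real" where
  "Delta_tilde N y i = (\<lambda>j. (1 / real N) * (\<Sum>l\<in>{1..<i}. ip N (y i) (y l) * y l j))"

definition Delta2 :: "nat \<Rightarrow> (nat \<Rightarrow> nat \<Rightarrow> real) \<Rightarrow> nat \<Rightarrow> nat \<Rightarrow> real" where
  "Delta2 N y i = (\<lambda>j. (1 / real N) *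
     (\<Sum>l\<in>{1..<i}. ip N (y i) (\<lambda>m. y l m - Delta N y l m) * y l j))"

definition dd :: "nat \<Rightarrow> (nat \<Rightarrow> nat \<Rightarrow> real) \<Rightarrow> nat \<Rightarrow> nat \<Rightarrow> real" where
  "dd N y i = (\<lambda>j. Delta2 N y i j - Delta_tilde N y i j)"

end

theory Submission
  imports Defs
begin

text \<open>Let \<open>D\<^sub>i\<close> be \<open>dd N y i = -N\<^sup>-\<^sup>1 \<Sum>\<^sub>l\<^sub><\<^sub>i a\<^sub>l y\<^sub>l\<close> with \<open>a\<^sub>l = \<langle>y\<^sub>i, \<Delta>\<^sub>l\<rangle>\<close>, and split
  \<open>y\<^sub>l = w\<^sub>l + \<Delta>\<^sub>l\<close>. The \<open>w\<^sub>l\<close> are orthogonal with \<open>|w\<^sub>l| \<le> |y\<^sub>l|\<close>, so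
  \<open>|D\<^sub>i|\<^sup>2 \<le> 2N\<^sup>-\<^sup>2 (\<Sum> a\<^sub>l\<^sup>2 |y\<^sub>l|\<^sup>2 + (i - 1) \<Sum> a\<^sub>l\<^sup>2 |\<Delta>\<^sub>l|\<^sup>2)\<close>.
  Conditionally on all rows but \<open>y\<^sub>i\<close>, each \<open>a\<^sub>l\<close> is a centred Gaussian of variance \<open>|\<Delta>\<^sub>l|\<^sup>2\<close>,
  and by Bessel's inequality \<open>|\<Delta>\<^sub>l|\<^sup>2 \<le> \<Sum>\<^sub>m\<^sub><\<^sub>l \<langle>y\<^sub>l, \<gamma>\<^sub>m\<rangle>\<^sup>2\<close>, where \<open>\<langle>y\<^sub>l, \<gamma>\<^sub>m\<rangle>\<close> is,
  conditionally on the other rows, Gaussian of variance at most 1. Moment bounds for Gaussian linear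
  forms (from the moment generating function) then give \<open>E |D\<^sub>i|\<^sup>2\<^sup>q \<le> C (\<rho>\<^sup>q + \<rho>\<^sup>2\<^sup>q)\<close> with
  \<open>\<rho> = k\<^sup>2/N\<close> for \<open>i \<le> k\<close>. Cauchy--Schwarz reduces \<open>\<langle>D\<^sub>l, D\<^sub>m\<rangle>\<close> to \<open>|D\<^sub>l|\<close> and \<open>|D\<^sub>m|\<close>,
  and \<open>k = O(N\<^sup>1\<^sup>/\<^sup>2\<^sup>-\<^sup>\<delta>)\<close> becomes \<open>k/\<surd>N \<le> c N\<^sup>-\<^sup>\<delta>\<close> for every \<open>N \<ge> 1\<close>.\<close>

section \<open>Moments of Gaussian linear forms\<close>

lemma std_normal_mgf:
  "(\<integral>\<^sup>+x. ennreal (exp (s * x)) \<partial>std_normal_distribution) = ennreal (exp (s\<^sup>2 / 2))"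
proof -
  have shift: "std_normal_density x * exp (s * x) = exp (s\<^sup>2 / 2) * normal_density s 1 x" for x
  proof -
    have "- x\<^sup>2 / 2 + s * x = s\<^sup>2 / 2 + (- (x - s)\<^sup>2 / 2)"
      by (simp add: power2_eq_square field_simps)
    then have "exp (- x\<^sup>2 / 2) * exp (s * x) = exp (s\<^sup>2 / 2) * exp (- (x - s)\<^sup>2 / 2)"
      by (metis exp_add)
    then show ?thesis by (simp add: std_normal_density_def normal_density_def)
  qed
  have total: "(\<integral>\<^sup>+x. ennreal (normal_density s 1 x) \<partial>lborel) = 1"
  proof -
    interpret prob_space "density lborel (\<lambda>x. ennreal (normal_density s 1 x))"
      using prob_space_normal_density[of 1 s] by simp
    show ?thesis using emeasure_space_1 by (simp add: emeasure_density)
  qed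
  have "(\<integral>\<^sup>+x. ennreal (exp (s * x)) \<partial>std_normal_distribution)
      = (\<integral>\<^sup>+x. ennreal (std_normal_density x) * ennreal (exp (s * x)) \<partial>lborel)"
    by (subst nn_integral_density) auto
  also have "\<dots> = (\<integral>\<^sup>+x. ennreal (exp (s\<^sup>2 / 2)) * ennreal (normal_density s 1 x) \<partial>lborel)"
    by (intro nn_integral_cong) (simp add: ennreal_mult[symmetric] shift)
  also have "\<dots> = ennreal (exp (s\<^sup>2 / 2))"
    by (simp add: nn_integral_cmult total)
  finally show ?thesis .
qed

lemma power_div_fact_le_exp_add_exp_minus: "(z::real) ^ n / fact n \<le> exp z + exp (- z)"
proof -
  have "z ^ n / fact n \<le> \<bar>z\<bar> ^ n / fact n"
    by (intro divide_right_mono) (auto simp: power_abs[symmetric])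
  also have "\<dots> = (\<Sum>i\<in>{n}. \<bar>z\<bar> ^ i /\<^sub>R fact i)"
    by (simp add: divide_inverse mult.commute)
  also have "\<dots> \<le> (\<Sum>i. \<bar>z\<bar> ^ i /\<^sub>R fact i)"
    by (rule sum_le_suminf[OF summable_exp_generic]) auto
  also have "\<dots> = exp \<bar>z\<bar>" by (simp add: exp_def)
  also have "\<dots> \<le> exp z + exp (- z)" by (cases "z \<ge> 0") auto
  finally show ?thesis .
qed

definition gauss_moment_const :: "nat \<Rightarrow> real" where
  "gauss_moment_const m = 2 * exp (1/2) * fact (2 * m)"

lemma gauss_moment_const_pos: "gauss_moment_const m > 0"
  by (simp add: gauss_moment_const_def)

lemma gauss_moment_const_ge_1: "gauss_moment_const m \<ge> 1"
proof -
  have "1 \<le> exp (1/2::real) * fact (2 * m)"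
    using mult_mono[of 1 "exp (1/2::real)" 1 "fact (2 * m)"] by simp
  then show ?thesis unfolding gauss_moment_const_def by linarith
qed

interpretation std_normal: product_prob_space "\<lambda>_. std_normal_distribution" I for I
proof -
  have "prob_space std_normal_distribution"
    using prob_space_normal_density[of 1 0] by simp
  then show "product_prob_space (\<lambda>_. std_normal_distribution)"
    unfolding product_prob_space_def product_prob_space_axioms_def product_sigma_finite_def
    using prob_space_imp_sigma_finite by blast
qed

lemma prob_space_std_normal_PiM: "prob_space (PiM J (\<lambda>_. std_normal_distribution))"
  by (rule prob_space_PiM) (use prob_space_normal_density[of 1 0] in simp)

lemma gauss_linear_form_mgf:
  assumes "finite J"
  shows "(\<integral>\<^sup>+y. ennreal (exp (t * (\<Sum>x\<in>J. v x * y x))) \<partial>PiM J (\<lambda>_. std_normal_distribution))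
       = ennreal (exp (t\<^sup>2 * (\<Sum>x\<in>J. (v x)\<^sup>2) / 2))"
proof -
  have "(\<integral>\<^sup>+y. ennreal (exp (t * (\<Sum>x\<in>J. v x * y x))) \<partial>PiM J (\<lambda>_. std_normal_distribution))
     = (\<integral>\<^sup>+y. (\<Prod>x\<in>J. ennreal (exp ((t * v x) * y x))) \<partial>PiM J (\<lambda>_. std_normal_distribution))"
    using assms
    by (intro nn_integral_cong) (simp add: sum_distrib_left exp_sum mult.assoc prod_ennreal)
  also have "\<dots> = (\<Prod>x\<in>J. (\<integral>\<^sup>+z. ennreal (exp ((t * v x) * z)) \<partial>std_normal_distribution))"
    by (rule std_normal.product_nn_integral_prod[OF assms]) auto
  also have "\<dots> = (\<Prod>x\<in>J. ennreal (exp ((t * v x)\<^sup>2 / 2)))"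
    by (simp add: std_normal_mgf)
  also have "\<dots> = ennreal (exp (t\<^sup>2 * (\<Sum>x\<in>J. (v x)\<^sup>2) / 2))"
    using assms
    by (simp add: prod_ennreal exp_sum[symmetric] power_mult_distrib sum_distrib_left sum_divide_distrib)
  finally show ?thesis .
qed

text \<open>The Chernoff-type bound \<open>z\<^sup>2\<^sup>m \<le> (2m)! (e\<^sup>z + e\<^sup>-\<^sup>z)\<close>, applied to the linear form
  normalised to unit variance, turns the moment generating function into moment bounds.\<close>
lemma gauss_linear_form_moment:
  assumes "finite J"
  shows "(\<integral>\<^sup>+y. ennreal ((\<Sum>x\<in>J. v x * y x) ^ (2 * m)) \<partial>PiM J (\<lambda>_. std_normal_distribution))
       \<le> ennreal (gauss_moment_const m * (\<Sum>x\<in>J. (v x)\<^sup>2) ^ m)"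
proof (cases "(\<Sum>x\<in>J. (v x)\<^sup>2) = 0")
  case True
  then have "\<forall>x\<in>J. v x = 0" using assms by (simp add: sum_nonneg_eq_0_iff)
  then show ?thesis
    using gauss_moment_const_ge_1[of 0]
    by (cases "m = 0") (simp_all add: power_0_left prob_space.emeasure_space_1[OF prob_space_std_normal_PiM])
next
  case False
  define S where "S = (\<Sum>x\<in>J. (v x)\<^sup>2)"
  have S: "S > 0" using False unfolding S_def by (simp add: sum_nonneg order_le_neq_trans)
  define t where "t = 1 / sqrt S"
  have tS: "t\<^sup>2 * S = 1" using S unfolding t_def by (simp add: power_divide)
  let ?M = "PiM J (\<lambda>_. std_normal_distribution)"
  let ?L = "\<lambda>y. \<Sum>x\<in>J. v x * y x"
  let ?c = "fact (2 * m) * S ^ m"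
  have pointwise: "z ^ (2 * m) \<le> ?c * (exp (t * z) + exp ((- t) * z))" for z :: real
  proof -
    have "(t * z) ^ (2 * m) \<le> fact (2 * m) * (exp (t * z) + exp ((- t) * z))"
      using power_div_fact_le_exp_add_exp_minus[of "t * z" "2 * m"] by (simp add: divide_le_eq mult.commute)
    then have "S ^ m * (t * z) ^ (2 * m) \<le> S ^ m * (fact (2 * m) * (exp (t * z) + exp ((- t) * z)))"
      using S by (intro mult_left_mono) auto
    moreover have "S ^ m * (t * z) ^ (2 * m) = (t\<^sup>2 * S) ^ m * z ^ (2 * m)"
      by (simp add: power_mult_distrib power_mult)
    ultimately have "(t\<^sup>2 * S) ^ m * z ^ (2 * m) \<le> S ^ m * (fact (2 * m) * (exp (t * z) + exp ((- t) * z)))"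
      by simp
    then show ?thesis using tS by (simp add: mult_ac)
  qed
  have mgf: "(\<integral>\<^sup>+y. ennreal (exp (t * ?L y)) \<partial>?M) = ennreal (exp (1/2))"
    "(\<integral>\<^sup>+y. ennreal (exp (- (t * ?L y))) \<partial>?M) = ennreal (exp (1/2))"
    using gauss_linear_form_mgf[OF assms, of t v] gauss_linear_form_mgf[OF assms, of "- t" v] tS
    unfolding S_def by simp_all
  have "(\<integral>\<^sup>+y. ennreal (?L y ^ (2 * m)) \<partial>?M)
      \<le> (\<integral>\<^sup>+y. ennreal ?c * ennreal (exp (t * ?L y)) + ennreal ?c * ennreal (exp ((- t) * ?L y)) \<partial>?M)"
    using pointwise S
    by (intro nn_integral_mono) (simp add: ennreal_mult[symmetric] ennreal_plus[symmetric] ennreal_leI distrib_left del: ennreal_plus)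
  also have "\<dots> = ennreal ?c * ennreal (exp (1/2)) + ennreal ?c * ennreal (exp (1/2))"
    by (simp add: nn_integral_add nn_integral_cmult mgf)
  also have "\<dots> = ennreal (gauss_moment_const m * S ^ m)"
    using S by (simp add: gauss_moment_const_def ennreal_mult[symmetric] ennreal_plus[symmetric] del: ennreal_plus)
  finally show ?thesis unfolding S_def .
qed

section \<open>Gram--Schmidt geometry\<close>

abbreviation sqnorm :: "nat \<Rightarrow> (nat \<Rightarrow> real) \<Rightarrow> real" where
  "sqnorm N u \<equiv> ip N u u"

lemma ip_commute: "ip N u v = ip N v u"
  unfolding ip_def by (simp add: mult.commute)

lemma ip_sum_left: "ip N (\<lambda>j. \<Sum>m\<in>M. f m j) u = (\<Sum>m\<in>M. ip N (f m) u)"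
  unfolding ip_def by (simp add: sum_distrib_right sum.swap[of _ M])

lemma ip_sum_right: "ip N u (\<lambda>j. \<Sum>m\<in>M. f m j) = (\<Sum>m\<in>M. ip N u (f m))"
  unfolding ip_def by (simp add: sum_distrib_left sum.swap[of _ M])

lemma ip_scale_left: "ip N (\<lambda>j. c * v j) u = c * ip N v u"
  unfolding ip_def by (simp add: sum_distrib_left mult_ac)

lemma ip_scale_right: "ip N u (\<lambda>j. c * v j) = c * ip N u v"
  unfolding ip_def by (simp add: sum_distrib_left mult_ac)

lemma ip_divide_left: "ip N (\<lambda>j. v j / c) u = ip N v u / c"
  unfolding ip_def by (simp add: sum_divide_distrib)

lemma ip_divide_right: "ip N u (\<lambda>j. v j / c) = ip N u v / c"
  unfolding ip_def by (simp add: sum_divide_distrib)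

lemma ip_add_left: "ip N (\<lambda>j. u j + v j) w = ip N u w + ip N v w"
  unfolding ip_def by (simp add: algebra_simps sum.distrib)

lemma ip_diff_left: "ip N (\<lambda>j. u j - v j) w = ip N u w - ip N v w"
  unfolding ip_def by (simp add: algebra_simps sum_subtractf)

lemma ip_diff_right: "ip N w (\<lambda>j. u j - v j) = ip N w u - ip N w v"
  unfolding ip_def by (simp add: algebra_simps sum_subtractf)

lemma sqnorm_nonneg: "sqnorm N u \<ge> 0"
  unfolding ip_def by (simp add: sum_nonneg)

lemma ip_eq_0_if_sqnorm_eq_0: "sqnorm N u = 0 \<Longrightarrow> ip N v u = 0"
  unfolding ip_def by (simp add: sum_nonneg_eq_0_iff)

lemma ip_cong:
  "(\<And>j. j \<in> {1..N} \<Longrightarrow> u j = u' j) \<Longrightarrow> (\<And>j. j \<in> {1..N} \<Longrightarrow> v j = v' j) \<Longrightarrow> ip N u v = ip N u' v'"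
  unfolding ip_def by (intro sum.cong) auto

lemma ip_squared_le: "(ip N u v)\<^sup>2 \<le> sqnorm N u * sqnorm N v"
  unfolding ip_def using Cauchy_Schwarz_ineq_sum[of u v "{1..N}"] by (simp add: power2_eq_square)

lemma sqnorm_orthogonal_sum:
  assumes "finite M" "\<And>m m'. m \<in> M \<Longrightarrow> m' \<in> M \<Longrightarrow> m \<noteq> m' \<Longrightarrow> ip N (u m) (u m') = 0"
  shows "sqnorm N (\<lambda>j. \<Sum>m\<in>M. a m * u m j) = (\<Sum>m\<in>M. (a m)\<^sup>2 * sqnorm N (u m))"
proof -
  have "sqnorm N (\<lambda>j. \<Sum>m\<in>M. a m * u m j) = (\<Sum>m\<in>M. \<Sum>m'\<in>M. a m * a m' * ip N (u m) (u m'))"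
    by (simp add: ip_sum_left ip_sum_right ip_scale_left ip_scale_right mult_ac)
  also have "\<dots> = (\<Sum>m\<in>M. a m * a m * sqnorm N (u m))"
  proof (intro sum.cong refl)
    fix m assume m: "m \<in> M"
    have "(\<Sum>m'\<in>M - {m}. a m * a m' * ip N (u m) (u m')) = 0"
      using assms(2)[OF m] by (intro sum.neutral) auto
    then show "(\<Sum>m'\<in>M. a m * a m' * ip N (u m) (u m')) = a m * a m * sqnorm N (u m)"
      using assms(1) m by (subst sum.remove[of _ m]) auto
  qed
  finally show ?thesis by (simp add: power2_eq_square)
qed

lemma length_GS [simp]: "length (GS N y i) = i"
  by (induction i) auto

lemma GS_nth: "m < i \<Longrightarrow> GS N y i ! m = wv N y (Suc m)"
proof (induction i)
  case (Suc i)
  show ?case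
  proof (cases "m < i")
    case False
    with Suc.prems have "m = i" by simp
    then show ?thesis by (simp add: wv_def)
  qed (use Suc in \<open>simp add: nth_append\<close>)
qed simp

lemma wv_rec:
  assumes "1 \<le> i"
  shows "wv N y i = (\<lambda>j. y i j - (\<Sum>m\<in>{1..<i}. ip N (y i) (wv N y m) / sqnorm N (wv N y m) * wv N y m j))"
proof -
  obtain n where n: "i = Suc n" using assms by (cases i) auto
  have "{1..<Suc n} = Suc ` {..<n}"
    by (auto simp: image_Suc_lessThan)
  then have "(\<Sum>u\<leftarrow>GS N y n. f u) = (\<Sum>m\<in>{1..<Suc n}. f (wv N y m))" for f :: "(nat \<Rightarrow> real) \<Rightarrow> real"
    by (simp add: sum_list_sum_nth atLeast0LessThan GS_nth sum.reindex)
  then show ?thesis using n by (simp add: wv_def nth_append)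
qed

lemma wv_orthogonal_lt: "1 \<le> m \<Longrightarrow> m < i \<Longrightarrow> ip N (wv N y i) (wv N y m) = 0"
proof (induction i arbitrary: m rule: less_induct)
  case (less i)
  let ?w = "wv N y"
  let ?c = "\<lambda>m. ip N (y i) (?w m) / sqnorm N (?w m)"
  have orth: "ip N (?w m') (?w m) = 0" if "m' \<in> {1..<i}" "m' \<noteq> m" for m'
    using less.IH[of m m'] less.IH[of m' m] less.prems that
    by (cases "m' < m") (auto simp: ip_commute)
  have "ip N (?w i) (?w m) = ip N (y i) (?w m) - (\<Sum>m'\<in>{1..<i}. ?c m' * ip N (?w m') (?w m))"
    using less.prems
    by (subst wv_rec) (simp_all add: ip_diff_left ip_sum_left ip_scale_left ip_divide_left)
  also have "(\<Sum>m'\<in>{1..<i}. ?c m' * ip N (?w m') (?w m)) = ?c m * sqnorm N (?w m)"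
    using less.prems orth by (subst sum.remove[of _ m]) (auto intro!: sum.neutral)
  also have "\<dots> = ip N (y i) (?w m)"
    using ip_eq_0_if_sqnorm_eq_0[of N "?w m" "y i"] by (cases "sqnorm N (?w m) = 0") auto
  finally show ?case by simp
qed

lemma wv_orthogonal: "1 \<le> m \<Longrightarrow> 1 \<le> m' \<Longrightarrow> m \<noteq> m' \<Longrightarrow> ip N (wv N y m) (wv N y m') = 0"
  using wv_orthogonal_lt[of m m' N y] wv_orthogonal_lt[of m' m N y]
  by (cases "m < m'") (auto simp: ip_commute)

lemma gammav_orthogonal: "1 \<le> m \<Longrightarrow> 1 \<le> m' \<Longrightarrow> m \<noteq> m' \<Longrightarrow> ip N (gammav N y m) (gammav N y m') = 0"
  unfolding gammav_def ip_divide_left ip_divide_right by (simp add: wv_orthogonal)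

lemma sqnorm_gammav_le_1: "sqnorm N (gammav N y m) \<le> 1"
  using sqnorm_nonneg[of N "wv N y m"]
  unfolding gammav_def ip_divide_left ip_divide_right by (simp add: divide_le_eq)

text \<open>The normalisation in \<^const>\<open>gammav\<close> is harmless even when \<open>w\<^sub>m = 0\<close>, where both sides vanish.\<close>
lemma wv_eq_sub_Delta: "1 \<le> l \<Longrightarrow> wv N y l = (\<lambda>j. y l j - Delta N y l j)"
proof -
  have "ip N v (gammav N y m) * gammav N y m j = ip N v (wv N y m) / sqnorm N (wv N y m) * wv N y m j"
    for v m j
    using sqnorm_nonneg[of N "wv N y m"] unfolding gammav_def ip_divide_right by simp
  then show "1 \<le> l \<Longrightarrow> ?thesis" by (subst wv_rec) (simp_all add: Delta_def)
qed

text \<open>Bessel's inequality for the orthonormal (or zero) vectors \<open>\<gamma>\<^sub>m\<close>.\<close>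
lemma sqnorm_Delta_le: "sqnorm N (Delta N y l) \<le> (\<Sum>m\<in>{1..<l}. (ip N (y l) (gammav N y m))\<^sup>2)"
proof -
  have "sqnorm N (Delta N y l) = (\<Sum>m\<in>{1..<l}. (ip N (y l) (gammav N y m))\<^sup>2 * sqnorm N (gammav N y m))"
    unfolding Delta_def by (rule sqnorm_orthogonal_sum) (auto intro: gammav_orthogonal)
  also have "\<dots> \<le> (\<Sum>m\<in>{1..<l}. (ip N (y l) (gammav N y m))\<^sup>2)"
    by (intro sum_mono) (simp add: sqnorm_gammav_le_1 mult_left_le)
  finally show ?thesis .
qed

lemma sqnorm_wv_le: "1 \<le> l \<Longrightarrow> sqnorm N (wv N y l) \<le> sqnorm N (y l)"
proof -
  assume l: "1 \<le> l"
  have Delta_wv: "Delta N y l = (\<lambda>j. \<Sum>m\<in>{1..<l}. ip N (y l) (gammav N y m) / sqrt (sqnorm N (wv N y m)) * wv N y m j)"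
    unfolding Delta_def gammav_def by simp
  have orth: "ip N (wv N y l) (Delta N y l) = 0"
    unfolding Delta_wv ip_sum_right ip_scale_right using l by (auto simp: wv_orthogonal_lt intro!: sum.neutral)
  have "y l = (\<lambda>j. wv N y l j + Delta N y l j)" using wv_eq_sub_Delta[OF l] by auto
  then have "sqnorm N (y l) = sqnorm N (wv N y l) + 2 * ip N (wv N y l) (Delta N y l) + sqnorm N (Delta N y l)"
    by (subst (1 2) \<open>y l = _\<close>)
      (simp add: ip_add_left ip_commute[of N _ "\<lambda>j. wv N y l j + Delta N y l j"] ip_commute[of N "Delta N y l" "wv N y l"])
  then show ?thesis using orth sqnorm_nonneg[of N "Delta N y l"] by simp
qed

lemma dd_eq: "dd N y i = (\<lambda>j. - (1 / real N) * (\<Sum>l\<in>{1..<i}. ip N (y i) (Delta N y l) * y l j))"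
  unfolding dd_def Delta2_def Delta_tilde_def
  by (simp add: ip_diff_right algebra_simps sum_subtractf[symmetric] sum_distrib_left)

lemma sqnorm_add_le: "sqnorm N (\<lambda>j. u j + v j) \<le> 2 * sqnorm N u + 2 * sqnorm N v"
proof -
  have pointwise: "(u j + v j)\<^sup>2 \<le> 2 * (u j)\<^sup>2 + 2 * (v j)\<^sup>2" for j
    using zero_le_power2[of "u j - v j"] by (simp add: power2_eq_square algebra_simps)
  have "sqnorm N (\<lambda>j. u j + v j) = (\<Sum>j\<in>{1..N}. (u j + v j)\<^sup>2)"
    unfolding ip_def by (simp add: power2_eq_square)
  also have "\<dots> \<le> (\<Sum>j\<in>{1..N}. 2 * (u j)\<^sup>2 + 2 * (v j)\<^sup>2)"
    by (intro sum_mono pointwise)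
  also have "\<dots> = 2 * sqnorm N u + 2 * sqnorm N v"
    unfolding ip_def by (simp add: sum.distrib sum_distrib_left power2_eq_square)
  finally show ?thesis .
qed

lemma sqnorm_sum_le_card: "sqnorm N (\<lambda>j. \<Sum>l\<in>L. u l j) \<le> real (card L) * (\<Sum>l\<in>L. sqnorm N (u l))"
proof -
  have "sqnorm N (\<lambda>j. \<Sum>l\<in>L. u l j) = (\<Sum>j\<in>{1..N}. (\<Sum>l\<in>L. u l j)\<^sup>2)"
    unfolding ip_def by (simp add: power2_eq_square)
  also have "\<dots> \<le> (\<Sum>j\<in>{1..N}. real (card L) * (\<Sum>l\<in>L. (u l j)\<^sup>2))"
    using sum_squared_le_sum_of_squares[of "\<lambda>l. u l _" L] by (intro sum_mono) (simp add: mult.commute)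
  also have "\<dots> = real (card L) * (\<Sum>l\<in>L. \<Sum>j\<in>{1..N}. (u l j)\<^sup>2)"
    unfolding sum_distrib_left by (rule sum.swap)
  also have "\<dots> = real (card L) * (\<Sum>l\<in>L. sqnorm N (u l))"
    unfolding ip_def by (simp add: power2_eq_square)
  finally show ?thesis .
qed

text \<open>Splitting \<open>y\<^sub>l = w\<^sub>l + \<Delta>\<^sub>l\<close>: the \<open>w\<^sub>l\<close>-part is an orthogonal sum, only the \<open>\<Delta>\<^sub>l\<close>-part
  costs a factor \<open>i - 1\<close>.\<close>
lemma sqnorm_combination_le:
  "sqnorm N (\<lambda>j. \<Sum>l\<in>{1..<i}. a l * y l j) \<le>
     2 * (\<Sum>l\<in>{1..<i}. (a l)\<^sup>2 * sqnorm N (y l))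
     + 2 * real (i - 1) * (\<Sum>l\<in>{1..<i}. (a l)\<^sup>2 * sqnorm N (Delta N y l))"
proof -
  let ?L = "{1..<i}"
  have "(\<lambda>j. \<Sum>l\<in>?L. a l * y l j) = (\<lambda>j. (\<Sum>l\<in>?L. a l * wv N y l j) + (\<Sum>l\<in>?L. a l * Delta N y l j))"
    unfolding sum.distrib[symmetric] by (intro ext sum.cong) (auto simp: wv_eq_sub_Delta algebra_simps)
  moreover have "sqnorm N (\<lambda>j. \<Sum>l\<in>?L. a l * wv N y l j) \<le> (\<Sum>l\<in>?L. (a l)\<^sup>2 * sqnorm N (y l))"
  proof -
    have "sqnorm N (\<lambda>j. \<Sum>l\<in>?L. a l * wv N y l j) = (\<Sum>l\<in>?L. (a l)\<^sup>2 * sqnorm N (wv N y l))"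
      by (rule sqnorm_orthogonal_sum) (auto intro: wv_orthogonal)
    also have "\<dots> \<le> (\<Sum>l\<in>?L. (a l)\<^sup>2 * sqnorm N (y l))"
      by (intro sum_mono mult_left_mono sqnorm_wv_le) auto
    finally show ?thesis .
  qed
  moreover have "sqnorm N (\<lambda>j. \<Sum>l\<in>?L. a l * Delta N y l j) \<le> real (i - 1) * (\<Sum>l\<in>?L. (a l)\<^sup>2 * sqnorm N (Delta N y l))"
    using sqnorm_sum_le_card[of N "\<lambda>l j. a l * Delta N y l j" ?L]
    by (simp add: ip_scale_left ip_scale_right power2_eq_square mult.assoc)
  ultimately show ?thesis
    using sqnorm_add_le[of N "\<lambda>j. \<Sum>l\<in>?L. a l * wv N y l j" "\<lambda>j. \<Sum>l\<in>?L. a l * Delta N y l j"]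
    by simp
qed

lemma sqnorm_dd_le:
  "sqnorm N (dd N y i) \<le> 2 / (real N)\<^sup>2 *
     ((\<Sum>l\<in>{1..<i}. (ip N (y i) (Delta N y l))\<^sup>2 * sqnorm N (y l))
      + real (i - 1) * (\<Sum>l\<in>{1..<i}. (ip N (y i) (Delta N y l))\<^sup>2 * sqnorm N (Delta N y l)))"
proof -
  have "sqnorm N (dd N y i)
      = (1 / real N)\<^sup>2 * sqnorm N (\<lambda>j. \<Sum>l\<in>{1..<i}. ip N (y i) (Delta N y l) * y l j)"
    unfolding dd_eq ip_scale_left ip_scale_right by (simp add: power2_eq_square)
  also have "\<dots> \<le> (1 / real N)\<^sup>2 * (2 * (\<Sum>l\<in>{1..<i}. (ip N (y i) (Delta N y l))\<^sup>2 * sqnorm N (y l))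
     + 2 * real (i - 1) * (\<Sum>l\<in>{1..<i}. (ip N (y i) (Delta N y l))\<^sup>2 * sqnorm N (Delta N y l)))"
    by (intro mult_left_mono sqnorm_combination_le) auto
  finally show ?thesis by (simp add: power_divide algebra_simps)
qed

section \<open>Integrating out one row\<close>

lemma prob_space_gauss_space: "prob_space (gauss_space N)"
  unfolding gauss_space_def by (rule prob_space_std_normal_PiM)

lemma measurable_gauss_coord [measurable]: "(\<lambda>\<omega>. \<omega> x) \<in> borel_measurable (gauss_space N)"
proof (cases "x \<in> {1..N} \<times> {1..N}")
  case True
  then show ?thesis unfolding gauss_space_def by measurable
next
  case False
  then have "\<omega> x = undefined" if "\<omega> \<in> space (gauss_space N)" for \<omega>
    using that by (cases x) (auto simp: gauss_space_def space_PiM PiE_def extensional_def)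
  then show ?thesis by (subst measurable_cong[where g = "\<lambda>_. undefined"]) auto
qed

lemma measurable_yv [measurable]: "(\<lambda>\<omega>. yv \<omega> i j) \<in> borel_measurable (gauss_space N)"
  unfolding yv_def by simp

lemma measurable_ip [measurable]:
  assumes "\<And>j. (\<lambda>\<omega>. u \<omega> j) \<in> borel_measurable M" "\<And>j. (\<lambda>\<omega>. v \<omega> j) \<in> borel_measurable M"
  shows "(\<lambda>\<omega>. ip N (u \<omega>) (v \<omega>)) \<in> borel_measurable M"
  unfolding ip_def by (intro borel_measurable_sum borel_measurable_times assms)

lemma measurable_wv [measurable]: "(\<lambda>\<omega>. wv N (yv \<omega>) i j) \<in> borel_measurable (gauss_space N)"
proof (induction i arbitrary: j rule: less_induct)
  case (less i)
  show ?case
  proof (cases "i = 0")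
    case False
    then have "1 \<le> i" by simp
    have "(\<lambda>\<omega>. wv N (yv \<omega>) m j') \<in> borel_measurable (gauss_space N)" if "m \<in> {1..<i}" for m j'
      using less.IH that by simp
    then show ?thesis
      unfolding wv_rec[OF \<open>1 \<le> i\<close>] ip_def
      by (intro borel_measurable_diff borel_measurable_sum borel_measurable_times
          borel_measurable_divide measurable_yv)
  qed (simp add: wv_def)
qed

lemma measurable_gammav [measurable]: "(\<lambda>\<omega>. gammav N (yv \<omega>) i j) \<in> borel_measurable (gauss_space N)"
  unfolding gammav_def by measurable

lemma measurable_Delta [measurable]: "(\<lambda>\<omega>. Delta N (yv \<omega>) i j) \<in> borel_measurable (gauss_space N)"
  unfolding Delta_def by measurable

lemma measurable_dd [measurable]: "(\<lambda>\<omega>. dd N (yv \<omega>) i j) \<in> borel_measurable (gauss_space N)"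
  unfolding dd_eq by measurable

lemma wv_rows_cong:
  assumes "\<And>m j. m \<in> {1..i} \<Longrightarrow> j \<in> {1..N} \<Longrightarrow> y m j = y' m j" and "j \<in> {1..N}"
  shows "wv N y i j = wv N y' i j"
  using assms
proof (induction i arbitrary: j rule: less_induct)
  case (less i)
  show ?case
  proof (cases "i = 0")
    case False
    then have i: "1 \<le> i" by simp
    have w: "wv N y m j' = wv N y' m j'" if "m \<in> {1..<i}" "j' \<in> {1..N}" for m j'
      using less.IH[of m j'] less.prems(1) that by auto
    have y: "y i j' = y' i j'" if "j' \<in> {1..N}" for j'
      using less.prems(1) i that by auto
    have "ip N (y i) (wv N y m) = ip N (y' i) (wv N y' m)"
      "sqnorm N (wv N y m) = sqnorm N (wv N y' m)" if "m \<in> {1..<i}" for m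
      using w[OF that] y by (auto intro!: ip_cong)
    then show ?thesis
      unfolding wv_rec[OF i, of N y] wv_rec[OF i, of N y']
      using y[OF less.prems(2)] w[OF _ less.prems(2)] by (auto intro!: sum.cong)
  qed (simp add: wv_def)
qed

lemma gammav_rows_cong:
  assumes "\<And>m j. m \<in> {1..i} \<Longrightarrow> j \<in> {1..N} \<Longrightarrow> y m j = y' m j" and "j \<in> {1..N}"
  shows "gammav N y i j = gammav N y' i j"
proof -
  have "sqnorm N (wv N y i) = sqnorm N (wv N y' i)"
    by (intro ip_cong) (use wv_rows_cong[OF assms(1)] in auto)
  then show ?thesis unfolding gammav_def using wv_rows_cong[OF assms] by simp
qed

lemma Delta_rows_cong:
  assumes "\<And>m j. m \<in> {1..i} \<Longrightarrow> j \<in> {1..N} \<Longrightarrow> y m j = y' m j" and "j \<in> {1..N}"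
  shows "Delta N y i j = Delta N y' i j"
proof -
  have g: "gammav N y m j' = gammav N y' m j'" if "m \<in> {1..<i}" "j' \<in> {1..N}" for m j'
    using gammav_rows_cong[of m N y y' j'] assms(1) that by auto
  have "ip N (y i) (gammav N y m) = ip N (y' i) (gammav N y' m)" if "m \<in> {1..<i}" for m
    using assms(1) g that by (intro ip_cong) auto
  then show ?thesis unfolding Delta_def using g assms(2) by (auto intro!: sum.cong)
qed

definition ignores_row :: "nat \<Rightarrow> nat \<Rightarrow> ((nat \<times> nat \<Rightarrow> real) \<Rightarrow> 'a) \<Rightarrow> bool" where
  "ignores_row N r F \<longleftrightarrow>
     (\<forall>\<omega> \<omega>'. (\<forall>x\<in>{1..N} \<times> {1..N}. fst x \<noteq> r \<longrightarrow> \<omega> x = \<omega>' x) \<longrightarrow> F \<omega> = F \<omega>')"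

lemma ignores_row_comp: "ignores_row N r F \<Longrightarrow> ignores_row N r (\<lambda>\<omega>. g (F \<omega>))"
  unfolding ignores_row_def by metis

lemma ignores_row_ip:
  assumes "\<forall>j\<in>{1..N}. ignores_row N r (\<lambda>\<omega>. u \<omega> j)" "\<forall>j\<in>{1..N}. ignores_row N r (\<lambda>\<omega>. v \<omega> j)"
  shows "ignores_row N r (\<lambda>\<omega>. ip N (u \<omega>) (v \<omega>))"
  using assms unfolding ignores_row_def by (metis ip_cong)

lemma ignores_row_yv: "l \<in> {1..N} \<Longrightarrow> l \<noteq> r \<Longrightarrow> j \<in> {1..N} \<Longrightarrow> ignores_row N r (\<lambda>\<omega>. yv \<omega> l j)"
  unfolding ignores_row_def yv_def by auto

lemma ignores_row_gammav:
  "l < r \<Longrightarrow> r \<le> N \<Longrightarrow> j \<in> {1..N} \<Longrightarrow> ignores_row N r (\<lambda>\<omega>. gammav N (yv \<omega>) l j)"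
  unfolding ignores_row_def by (auto intro!: gammav_rows_cong simp: yv_def)

lemma ignores_row_Delta:
  "l < r \<Longrightarrow> r \<le> N \<Longrightarrow> j \<in> {1..N} \<Longrightarrow> ignores_row N r (\<lambda>\<omega>. Delta N (yv \<omega>) l j)"
  unfolding ignores_row_def by (auto intro!: Delta_rows_cong simp: yv_def)

lemma measurable_std_normal_component:
  "z \<in> J \<Longrightarrow> (\<lambda>y. y z) \<in> borel_measurable (PiM J (\<lambda>_. std_normal_distribution))"
  using measurable_component_singleton[of z J "\<lambda>_. std_normal_distribution"]
  by (simp add: measurable_cong_sets[OF refl sets_density])

text \<open>With all rows but the \<open>r\<close>-th frozen (at \<open>x\<close>), \<open>\<langle>y\<^sub>r, V\<rangle>\<close> is a Gaussian linear form
  with the fixed coefficient vector \<open>V\<close>.\<close>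
lemma nn_integral_row_section_le:
  fixes N r :: nat and x :: "nat \<times> nat \<Rightarrow> real"
  defines "J \<equiv> {r} \<times> {1..N}" and "K \<equiv> {1..N} \<times> {1..N} - {r} \<times> {1..N}"
  assumes F_nonneg: "\<And>\<omega>. F \<omega> \<ge> 0"
    and F_row: "ignores_row N r F" and V_row: "\<forall>j\<in>{1..N}. ignores_row N r (\<lambda>\<omega>. V \<omega> j)"
  shows "(\<integral>\<^sup>+y. ennreal (F (merge K J (x, y)) * ip N (yv (merge K J (x, y)) r) (V (merge K J (x, y))) ^ (2 * m))
            \<partial>PiM J (\<lambda>_. std_normal_distribution))
       \<le> (\<integral>\<^sup>+y. ennreal (gauss_moment_const m * F (merge K J (x, y)) * sqnorm N (V (merge K J (x, y))) ^ m)
            \<partial>PiM J (\<lambda>_. std_normal_distribution))"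
proof -
  let ?M = "PiM J (\<lambda>_. std_normal_distribution)"
  define x0 where "x0 = merge K J (x, \<lambda>_. 0)"
  have agree: "\<forall>z\<in>{1..N} \<times> {1..N}. fst z \<noteq> r \<longrightarrow> merge K J (x, y) z = x0 z" for y
    unfolding x0_def merge_def K_def J_def by auto
  have F: "F (merge K J (x, y)) = F x0" for y
    using F_row agree unfolding ignores_row_def by blast
  have V: "V (merge K J (x, y)) j = V x0 j" if "j \<in> {1..N}" for y j
    using V_row agree that unfolding ignores_row_def by blast
  have row_r: "yv (merge K J (x, y)) r j = y (r, j)" if "j \<in> {1..N}" for y j
    unfolding yv_def merge_def K_def J_def using that by auto
  define v where "v = (\<lambda>z::nat \<times> nat. V x0 (snd z))"
  have sum_J: "(\<Sum>z\<in>J. h z) = (\<Sum>j\<in>{1..N}. h (r, j))" for h :: "nat \<times> nat \<Rightarrow> real"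
  proof -
    have "J = Pair r ` {1..N}" unfolding J_def by auto
    then show ?thesis by (simp add: sum.reindex inj_on_def)
  qed
  have form: "ip N (yv (merge K J (x, y)) r) (V (merge K J (x, y))) = (\<Sum>z\<in>J. v z * y z)" for y
    unfolding sum_J ip_def v_def by (intro sum.cong) (simp_all add: V row_r mult.commute)
  have var: "(\<Sum>z\<in>J. (v z)\<^sup>2) = sqnorm N (V x0)"
    unfolding sum_J ip_def v_def by (simp add: power2_eq_square)
  have "(\<integral>\<^sup>+y. ennreal (F (merge K J (x, y)) * ip N (yv (merge K J (x, y)) r) (V (merge K J (x, y))) ^ (2 * m)) \<partial>?M)
      = ennreal (F x0) * (\<integral>\<^sup>+y. ennreal ((\<Sum>z\<in>J. v z * y z) ^ (2 * m)) \<partial>?M)"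
    using F_nonneg[of x0]
    by (subst nn_integral_cmult[symmetric])
       (auto simp: F form ennreal_mult zero_le_even_power intro!: nn_integral_cong
         measurable_compose[OF _ measurable_ennreal] borel_measurable_power borel_measurable_sum
         borel_measurable_times measurable_std_normal_component)
  also have "\<dots> \<le> ennreal (F x0) * ennreal (gauss_moment_const m * sqnorm N (V x0) ^ m)"
    by (intro mult_left_mono gauss_linear_form_moment[of J v m, unfolded var]) (auto simp: J_def)
  also have "\<dots> = (\<integral>\<^sup>+y. ennreal (gauss_moment_const m * F (merge K J (x, y)) * sqnorm N (V (merge K J (x, y))) ^ m) \<partial>?M)"
  proof -
    have "sqnorm N (V (merge K J (x, y))) = sqnorm N (V x0)" for y
      by (intro ip_cong) (auto simp: V)
    then show ?thesis
      using F_nonneg[of x0] gauss_moment_const_pos[of m] sqnorm_nonneg[of N "V x0"]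
      by (simp add: F prob_space.emeasure_space_1[OF prob_space_std_normal_PiM]
          ennreal_mult[symmetric] mult_ac)
  qed
  finally show ?thesis .
qed

lemma nn_integral_row_linear_form_le:
  assumes r: "r \<in> {1..N}"
    and [measurable]: "F \<in> borel_measurable (gauss_space N)"
      "\<And>j. (\<lambda>\<omega>. V \<omega> j) \<in> borel_measurable (gauss_space N)"
    and "\<And>\<omega>. F \<omega> \<ge> 0" "ignores_row N r F" "\<forall>j\<in>{1..N}. ignores_row N r (\<lambda>\<omega>. V \<omega> j)"
  shows "(\<integral>\<^sup>+\<omega>. ennreal (F \<omega> * ip N (yv \<omega> r) (V \<omega>) ^ (2 * m)) \<partial>gauss_space N)
       \<le> (\<integral>\<^sup>+\<omega>. ennreal (gauss_moment_const m * F \<omega> * sqnorm N (V \<omega>) ^ m) \<partial>gauss_space N)"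
proof -
  let ?J = "{r} \<times> {1..N}" and ?K = "{1..N} \<times> {1..N} - {r} \<times> {1..N}"
  let ?M = "\<lambda>_::nat \<times> nat. std_normal_distribution"
  have "?K \<union> ?J = {1..N} \<times> {1..N}" using r by auto
  then have G: "gauss_space N = PiM (?K \<union> ?J) ?M" unfolding gauss_space_def by simp
  have KJ: "?K \<inter> ?J = {}" "finite ?K" "finite ?J" by auto
  let ?f = "\<lambda>\<omega>. ennreal (F \<omega> * ip N (yv \<omega> r) (V \<omega>) ^ (2 * m))"
  let ?g = "\<lambda>\<omega>. ennreal (gauss_moment_const m * F \<omega> * sqnorm N (V \<omega>) ^ m)"
  have f: "?f \<in> borel_measurable (PiM (?K \<union> ?J) ?M)" unfolding G[symmetric] by measurable
  have g: "?g \<in> borel_measurable (PiM (?K \<union> ?J) ?M)" unfolding G[symmetric] by measurable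
  have "(\<integral>\<^sup>+\<omega>. ?f \<omega> \<partial>gauss_space N) = (\<integral>\<^sup>+x. (\<integral>\<^sup>+y. ?f (merge ?K ?J (x, y)) \<partial>PiM ?J ?M) \<partial>PiM ?K ?M)"
    unfolding G by (rule std_normal.product_nn_integral_fold[OF KJ f])
  also have "\<dots> \<le> (\<integral>\<^sup>+x. (\<integral>\<^sup>+y. ?g (merge ?K ?J (x, y)) \<partial>PiM ?J ?M) \<partial>PiM ?K ?M)"
    using assms by (intro nn_integral_mono nn_integral_row_section_le) auto
  also have "\<dots> = (\<integral>\<^sup>+\<omega>. ?g \<omega> \<partial>gauss_space N)"
    unfolding G by (rule std_normal.product_nn_integral_fold[OF KJ g, symmetric])
  finally show ?thesis .
qed

lemma row_linear_form_moment_le: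
  assumes "r \<in> {1..N}"
    and [measurable]: "\<And>j. (\<lambda>\<omega>. V \<omega> j) \<in> borel_measurable (gauss_space N)"
    and "\<forall>j\<in>{1..N}. ignores_row N r (\<lambda>\<omega>. V \<omega> j)" and V_le_1: "\<And>\<omega>. sqnorm N (V \<omega>) \<le> 1"
  shows "(\<integral>\<^sup>+\<omega>. ennreal (ip N (yv \<omega> r) (V \<omega>) ^ (2 * m)) \<partial>gauss_space N) \<le> ennreal (gauss_moment_const m)"
proof -
  have "(\<integral>\<^sup>+\<omega>. ennreal (ip N (yv \<omega> r) (V \<omega>) ^ (2 * m)) \<partial>gauss_space N)
      \<le> (\<integral>\<^sup>+\<omega>. ennreal (gauss_moment_const m * 1 * sqnorm N (V \<omega>) ^ m) \<partial>gauss_space N)"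
    using nn_integral_row_linear_form_le[of r N "\<lambda>_. 1" V m] assms by (simp add: ignores_row_def)
  also have "\<dots> \<le> (\<integral>\<^sup>+\<omega>. ennreal (gauss_moment_const m) \<partial>gauss_space N)"
    using V_le_1 sqnorm_nonneg gauss_moment_const_pos[of m]
    by (intro nn_integral_mono ennreal_leI) (simp add: power_le_one mult_left_le)
  also have "\<dots> = ennreal (gauss_moment_const m)"
    by (simp add: prob_space.emeasure_space_1[OF prob_space_gauss_space])
  finally show ?thesis .
qed

section \<open>Moment bounds\<close>

lemma power_sum_le_card_power_sum:
  fixes f :: "'a \<Rightarrow> real"
  assumes "finite I" "\<And>i. i \<in> I \<Longrightarrow> f i \<ge> 0" "q \<ge> 1"
  shows "(\<Sum>i\<in>I. f i) ^ q \<le> real (card I) ^ (q - 1) * (\<Sum>i\<in>I. f i ^ q)"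
proof (cases "I = {}")
  case False
  let ?n = "real (card I)"
  have n: "?n > 0" using False assms(1) by (simp add: card_gt_0_iff)
  have "convex_on {0..} (\<lambda>x::real. x ^ q)"
    by (cases "even q") (auto intro: convex_power_odd convex_on_subset[OF convex_power_even])
  then have "(\<Sum>i\<in>I. (1 / ?n) *\<^sub>R f i) ^ q \<le> (\<Sum>i\<in>I. (1 / ?n) * f i ^ q)"
    using convex_on_sum[OF assms(1) False, of "{0..}" "\<lambda>x. x ^ q" "\<lambda>_. 1 / ?n" f] n assms(2) by simp
  then have "((\<Sum>i\<in>I. f i) / ?n) ^ q \<le> (\<Sum>i\<in>I. f i ^ q) / ?n"
    by (simp add: sum_distrib_right[symmetric] sum_distrib_left[symmetric] divide_inverse mult.commute)
  then have "(\<Sum>i\<in>I. f i) ^ q / ?n ^ q \<le> (\<Sum>i\<in>I. f i ^ q) / ?n"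
    by (simp add: power_divide)
  then have "(\<Sum>i\<in>I. f i) ^ q \<le> (\<Sum>i\<in>I. f i ^ q) / ?n * ?n ^ q"
    using n by (simp add: divide_le_eq)
  also have "\<dots> = ?n ^ (q - 1) * (\<Sum>i\<in>I. f i ^ q)"
    using n assms(3) by (simp add: power_eq_if)
  finally show ?thesis .
qed (use assms in \<open>simp add: power_0_left\<close>)

lemma power_add_le: "(x::real) \<ge> 0 \<Longrightarrow> y \<ge> 0 \<Longrightarrow> (x + y) ^ q \<le> 2 ^ q * (x ^ q + y ^ q)"
proof -
  assume "x \<ge> 0" "y \<ge> 0"
  then have "(x + y) ^ q \<le> (2 * max x y) ^ q" by (intro power_mono) auto
  also have "\<dots> = 2 ^ q * (max x y) ^ q" by (simp add: power_mult_distrib)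
  also have "\<dots> \<le> 2 ^ q * (x ^ q + y ^ q)"
    using \<open>x \<ge> 0\<close> \<open>y \<ge> 0\<close> by (intro mult_left_mono) (auto simp: max_def)
  finally show ?thesis .
qed

lemma nn_integral_power_sum_le:
  fixes f :: "'i \<Rightarrow> 'a \<Rightarrow> real"
  assumes L: "finite L" "card L \<le> n" and q: "q \<ge> 1" and c: "c \<ge> 0" and B: "B \<ge> 0"
    and f_meas: "\<And>l. l \<in> L \<Longrightarrow> f l \<in> borel_measurable M"
    and f_nonneg: "\<And>l \<omega>. l \<in> L \<Longrightarrow> f l \<omega> \<ge> 0"
    and f_moment: "\<And>l. l \<in> L \<Longrightarrow> (\<integral>\<^sup>+\<omega>. ennreal (f l \<omega> ^ q) \<partial>M) \<le> ennreal B"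
    and g: "\<And>\<omega>. 0 \<le> g \<omega>" "\<And>\<omega>. g \<omega> \<le> c * (\<Sum>l\<in>L. f l \<omega>)"
  shows "(\<integral>\<^sup>+\<omega>. ennreal (g \<omega> ^ q) \<partial>M) \<le> ennreal ((c * real n) ^ q * B)"
proof -
  let ?a = "c ^ q * real (card L) ^ (q - 1)"
  have a: "?a \<ge> 0" using c by simp
  have "g \<omega> ^ q \<le> ?a * (\<Sum>l\<in>L. f l \<omega> ^ q)" for \<omega>
  proof -
    have "g \<omega> ^ q \<le> (c * (\<Sum>l\<in>L. f l \<omega>)) ^ q"
      using g[of \<omega>] by (intro power_mono) auto
    also have "\<dots> = c ^ q * (\<Sum>l\<in>L. f l \<omega>) ^ q"
      by (rule power_mult_distrib)
    also have "\<dots> \<le> c ^ q * (real (card L) ^ (q - 1) * (\<Sum>l\<in>L. f l \<omega> ^ q))"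
      using L q c f_nonneg by (intro mult_left_mono power_sum_le_card_power_sum) auto
    finally show ?thesis by (simp add: mult.assoc)
  qed
  moreover have "ennreal ?a * (\<Sum>l\<in>L. ennreal (f l \<omega> ^ q)) = ennreal (?a * (\<Sum>l\<in>L. f l \<omega> ^ q))" for \<omega>
    using a f_nonneg by (simp add: sum_ennreal ennreal_mult sum_nonneg)
  ultimately have "(\<integral>\<^sup>+\<omega>. ennreal (g \<omega> ^ q) \<partial>M) \<le> (\<integral>\<^sup>+\<omega>. ennreal ?a * (\<Sum>l\<in>L. ennreal (f l \<omega> ^ q)) \<partial>M)"
    by (intro nn_integral_mono) (simp add: ennreal_leI)
  also have "\<dots> = ennreal ?a * (\<Sum>l\<in>L. \<integral>\<^sup>+\<omega>. ennreal (f l \<omega> ^ q) \<partial>M)"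
    using f_meas by (simp add: nn_integral_cmult nn_integral_sum)
  also have "\<dots> \<le> ennreal ?a * (\<Sum>l\<in>L. ennreal B)"
    by (intro mult_left_mono sum_mono f_moment) auto
  also have "\<dots> = ennreal (?a * (real (card L) * B))"
    using a B by (simp add: ennreal_mult ennreal_of_nat_eq_real_of_nat)
  also have "\<dots> \<le> ennreal ((c * real n) ^ q * B)"
  proof (rule ennreal_leI)
    have "?a * real (card L) = (c * real (card L)) ^ q"
      using q by (cases q) (simp_all add: power_mult_distrib mult_ac)
    also have "\<dots> \<le> (c * real n) ^ q"
      using L c by (intro power_mono mult_left_mono) auto
    finally show "?a * (real (card L) * B) \<le> (c * real n) ^ q * B"
      using B by (simp add: mult.assoc[symmetric] mult_right_mono)
  qed
  finally show ?thesis .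
qed

lemma nn_integral_power_add_le:
  assumes [measurable]: "f \<in> borel_measurable M" "g \<in> borel_measurable M"
    and "\<And>\<omega>. f \<omega> \<ge> 0" "\<And>\<omega>. g \<omega> \<ge> 0"
    and "(\<integral>\<^sup>+\<omega>. ennreal (f \<omega> ^ q) \<partial>M) \<le> ennreal A" "(\<integral>\<^sup>+\<omega>. ennreal (g \<omega> ^ q) \<partial>M) \<le> ennreal B"
    and "A \<ge> 0" "B \<ge> 0" "\<And>\<omega>. 0 \<le> h \<omega>" "\<And>\<omega>. h \<omega> \<le> f \<omega> + g \<omega>"
  shows "(\<integral>\<^sup>+\<omega>. ennreal (h \<omega> ^ q) \<partial>M) \<le> ennreal (2 ^ q * (A + B))"
proof -
  have "(\<integral>\<^sup>+\<omega>. ennreal (h \<omega> ^ q) \<partial>M) \<le> (\<integral>\<^sup>+\<omega>. ennreal (2 ^ q) * (ennreal (f \<omega> ^ q) + ennreal (g \<omega> ^ q)) \<partial>M)"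
  proof (intro nn_integral_mono)
    fix \<omega>
    have "h \<omega> ^ q \<le> (f \<omega> + g \<omega>) ^ q"
      using assms(9,10) by (intro power_mono)
    also have "\<dots> \<le> 2 ^ q * (f \<omega> ^ q + g \<omega> ^ q)"
      using assms(3,4) by (rule power_add_le)
    finally show "ennreal (h \<omega> ^ q) \<le> ennreal (2 ^ q) * (ennreal (f \<omega> ^ q) + ennreal (g \<omega> ^ q))"
      using assms(3,4)
      by (simp add: ennreal_mult[symmetric] ennreal_plus[symmetric] ennreal_leI del: ennreal_plus)
  qed
  also have "\<dots> = ennreal (2 ^ q) * ((\<integral>\<^sup>+\<omega>. ennreal (f \<omega> ^ q) \<partial>M) + (\<integral>\<^sup>+\<omega>. ennreal (g \<omega> ^ q) \<partial>M))"
    by (simp add: nn_integral_cmult nn_integral_add)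
  also have "\<dots> \<le> ennreal (2 ^ q) * (ennreal A + ennreal B)"
    using assms(5,6) by (intro mult_left_mono add_mono) auto
  also have "\<dots> = ennreal (2 ^ q * (A + B))"
    using assms(7,8) by (simp add: ennreal_mult ennreal_plus)
  finally show ?thesis .
qed

lemma nn_integral_mult_le_sqrt:
  assumes [measurable]: "f \<in> borel_measurable M" "g \<in> borel_measurable M"
    and "\<And>x. f x \<ge> 0" "\<And>x. g x \<ge> 0"
    and "(\<integral>\<^sup>+x. ennreal ((f x)\<^sup>2) \<partial>M) \<le> ennreal A" "(\<integral>\<^sup>+x. ennreal ((g x)\<^sup>2) \<partial>M) \<le> ennreal B"
    and "A \<ge> 0" "B \<ge> 0"
  shows "(\<integral>\<^sup>+x. ennreal (f x * g x) \<partial>M) \<le> ennreal (sqrt (A * B))"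
proof -
  let ?I = "\<integral>\<^sup>+x. ennreal (f x * g x) \<partial>M"
  have "?I\<^sup>2 \<le> (\<integral>\<^sup>+x. ennreal (f x) ^ 2 \<partial>M) * (\<integral>\<^sup>+x. ennreal (g x) ^ 2 \<partial>M)"
    using Cauchy_Schwarz_nn_integral[of "\<lambda>x. ennreal (f x)" M "\<lambda>x. ennreal (g x)"] assms(3,4)
    by (simp add: ennreal_mult)
  also have "\<dots> \<le> ennreal A * ennreal B"
    using assms(3-6) by (intro mult_mono) (simp_all add: ennreal_power)
  also have "\<dots> = ennreal (A * B)" using assms(7) by (rule ennreal_mult'[symmetric])
  finally have I2: "?I\<^sup>2 \<le> ennreal (A * B)" .
  show ?thesis
  proof (cases ?I)
    case (real r)
    then have "r\<^sup>2 \<le> A * B" using I2 assms(7,8) by (simp add: ennreal_power)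
    then show ?thesis using real by (simp add: real_le_rsqrt ennreal_leI)
  next
    case top
    then show ?thesis using I2 by (simp add: power2_eq_square top_unique)
  qed
qed

lemma sqnorm_yv_moment_le:
  assumes l: "l \<in> {1..N}" and q: "q \<ge> 1"
  shows "(\<integral>\<^sup>+\<omega>. ennreal (sqnorm N (yv \<omega> l) ^ q) \<partial>gauss_space N)
       \<le> ennreal (real N ^ q * gauss_moment_const q)"
proof -
  have coordinate: "(\<integral>\<^sup>+\<omega>. ennreal (((yv \<omega> l j)\<^sup>2) ^ q) \<partial>gauss_space N) \<le> ennreal (gauss_moment_const q)"
    if j: "j \<in> {1..N}" for j
  proof -
    define e where "e = (\<lambda>j'. if j' = j then 1 else (0::real))"
    have "ip N (yv \<omega> l) e = yv \<omega> l j" for \<omega>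
      unfolding ip_def e_def using j by (simp add: if_distrib cong: if_cong)
    moreover have "sqnorm N e = 1"
      unfolding ip_def e_def using j by (simp add: if_distrib cong: if_cong)
    ultimately show ?thesis
      using row_linear_form_moment_le[OF l, of "\<lambda>_. e" q] by (simp add: ignores_row_def power_mult)
  qed
  have "(\<integral>\<^sup>+\<omega>. ennreal (sqnorm N (yv \<omega> l) ^ q) \<partial>gauss_space N)
      \<le> ennreal ((1 * real N) ^ q * gauss_moment_const q)"
  proof (rule nn_integral_power_sum_le[where f = "\<lambda>j \<omega>. (yv \<omega> l j)\<^sup>2"])
    show "(\<lambda>\<omega>. (yv \<omega> l j)\<^sup>2) \<in> borel_measurable (gauss_space N)" for j
      by measurable
    show "sqnorm N (yv \<omega> l) \<le> 1 * (\<Sum>j\<in>{1..N}. (yv \<omega> l j)\<^sup>2)" for \<omega>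
      unfolding ip_def by (simp add: power2_eq_square)
  qed (use q coordinate in \<open>auto simp: sqnorm_nonneg gauss_moment_const_pos less_imp_le\<close>)
  then show ?thesis by simp
qed

lemma sqnorm_Delta_moment_le:
  assumes l: "l \<le> N" and q: "q \<ge> 1"
  shows "(\<integral>\<^sup>+\<omega>. ennreal (sqnorm N (Delta N (yv \<omega>) l) ^ q) \<partial>gauss_space N)
       \<le> ennreal (real (l - 1) ^ q * gauss_moment_const q)"
proof -
  have projection: "(\<integral>\<^sup>+\<omega>. ennreal (((ip N (yv \<omega> l) (gammav N (yv \<omega>) m))\<^sup>2) ^ q) \<partial>gauss_space N)
      \<le> ennreal (gauss_moment_const q)" if m: "m \<in> {1..<l}" for m
    using row_linear_form_moment_le[of l N "\<lambda>\<omega>. gammav N (yv \<omega>) m" q] m l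
    by (simp add: ignores_row_gammav sqnorm_gammav_le_1 power_mult)
  have "(\<integral>\<^sup>+\<omega>. ennreal (sqnorm N (Delta N (yv \<omega>) l) ^ q) \<partial>gauss_space N)
      \<le> ennreal ((1 * real (l - 1)) ^ q * gauss_moment_const q)"
  proof (rule nn_integral_power_sum_le[where f = "\<lambda>m \<omega>. (ip N (yv \<omega> l) (gammav N (yv \<omega>) m))\<^sup>2"])
    show "(\<lambda>\<omega>. (ip N (yv \<omega> l) (gammav N (yv \<omega>) m))\<^sup>2) \<in> borel_measurable (gauss_space N)" for m
      by measurable
    show "sqnorm N (Delta N (yv \<omega>) l) \<le> 1 * (\<Sum>m\<in>{1..<l}. (ip N (yv \<omega> l) (gammav N (yv \<omega>) m))\<^sup>2)"
      for \<omega> using sqnorm_Delta_le by simp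
  qed (use q projection in \<open>auto simp: sqnorm_nonneg gauss_moment_const_pos less_imp_le\<close>)
  then show ?thesis by simp
qed

lemma Delta_coefficient_moment_le:
  assumes "l < i" "i \<le> N"
    and [measurable]: "F \<in> borel_measurable (gauss_space N)"
    and F_nonneg: "\<And>\<omega>. F \<omega> \<ge> 0" and "ignores_row N i F"
  shows "(\<integral>\<^sup>+\<omega>. ennreal (F \<omega> * ip N (yv \<omega> i) (Delta N (yv \<omega>) l) ^ (2 * q)) \<partial>gauss_space N)
       \<le> ennreal (gauss_moment_const q) *
         (\<integral>\<^sup>+\<omega>. ennreal (F \<omega> * sqnorm N (Delta N (yv \<omega>) l) ^ q) \<partial>gauss_space N)"
proof -
  have "(\<integral>\<^sup>+\<omega>. ennreal (F \<omega> * ip N (yv \<omega> i) (Delta N (yv \<omega>) l) ^ (2 * q)) \<partial>gauss_space N)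
      \<le> (\<integral>\<^sup>+\<omega>. ennreal (gauss_moment_const q * F \<omega> * sqnorm N (Delta N (yv \<omega>) l) ^ q) \<partial>gauss_space N)"
    using assms by (intro nn_integral_row_linear_form_le) (auto simp: ignores_row_Delta)
  also have "\<dots> = (\<integral>\<^sup>+\<omega>. ennreal (gauss_moment_const q) * ennreal (F \<omega> * sqnorm N (Delta N (yv \<omega>) l) ^ q) \<partial>gauss_space N)"
    using gauss_moment_const_pos[of q, THEN less_imp_le] by (simp add: ennreal_mult' mult.assoc)
  also have "\<dots> = ennreal (gauss_moment_const q) *
      (\<integral>\<^sup>+\<omega>. ennreal (F \<omega> * sqnorm N (Delta N (yv \<omega>) l) ^ q) \<partial>gauss_space N)"
    by (rule nn_integral_cmult) measurable
  finally show ?thesis .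
qed

lemma coefficient_yv_moment_le:
  assumes l: "1 \<le> l" "l < i" and i: "i \<le> N" and q: "q \<ge> 1"
  shows "(\<integral>\<^sup>+\<omega>. ennreal (((ip N (yv \<omega> i) (Delta N (yv \<omega>) l))\<^sup>2 * sqnorm N (yv \<omega> l)) ^ q) \<partial>gauss_space N)
       \<le> ennreal (gauss_moment_const q * gauss_moment_const (2 * q) * real (l - 1) ^ q * real N ^ q)"
proof -
  let ?G = "gauss_moment_const"
  let ?s = "\<lambda>\<omega>. sqnorm N (yv \<omega> l) ^ q"
  let ?d = "\<lambda>\<omega>. sqnorm N (Delta N (yv \<omega>) l) ^ q"
  have s_measurable: "?s \<in> borel_measurable (gauss_space N)" by measurable
  have ignores: "ignores_row N i ?s"
    by (rule ignores_row_comp[where g = "\<lambda>x. x ^ q", OF ignores_row_ip]) (use l i in \<open>auto simp: ignores_row_yv\<close>)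
  have "(\<integral>\<^sup>+\<omega>. ennreal (?s \<omega> * ?d \<omega>) \<partial>gauss_space N)
      \<le> ennreal (sqrt (real N ^ (2 * q) * ?G (2 * q) * (real (l - 1) ^ (2 * q) * ?G (2 * q))))"
  proof (rule nn_integral_mult_le_sqrt)
    show "(\<integral>\<^sup>+\<omega>. ennreal ((?s \<omega>)\<^sup>2) \<partial>gauss_space N) \<le> ennreal (real N ^ (2 * q) * ?G (2 * q))"
      using sqnorm_yv_moment_le[of l N "2 * q"] l i q by (simp add: power_mult[symmetric] mult.commute)
    show "(\<integral>\<^sup>+\<omega>. ennreal ((?d \<omega>)\<^sup>2) \<partial>gauss_space N) \<le> ennreal (real (l - 1) ^ (2 * q) * ?G (2 * q))"
      using sqnorm_Delta_moment_le[of l N "2 * q"] l i q by (simp add: power_mult[symmetric] mult.commute)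
    show "0 \<le> ?s \<omega>" "0 \<le> ?d \<omega>" for \<omega>
      by (simp_all add: sqnorm_nonneg)
  qed (auto simp: ip_def gauss_moment_const_pos less_imp_le)
  also have "\<dots> = ennreal (?G (2 * q) * real (l - 1) ^ q * real N ^ q)"
  proof -
    have "real N ^ (2 * q) * ?G (2 * q) * (real (l - 1) ^ (2 * q) * ?G (2 * q))
        = (?G (2 * q) * real (l - 1) ^ q * real N ^ q)\<^sup>2"
      by (simp only: power_even_eq power_mult_distrib) (simp add: power2_eq_square mult_ac)
    then show ?thesis using gauss_moment_const_pos[of "2 * q"] by simp
  qed
  finally have product: "(\<integral>\<^sup>+\<omega>. ennreal (?s \<omega> * ?d \<omega>) \<partial>gauss_space N)
      \<le> ennreal (?G (2 * q) * real (l - 1) ^ q * real N ^ q)" .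
  have "(\<integral>\<^sup>+\<omega>. ennreal (((ip N (yv \<omega> i) (Delta N (yv \<omega>) l))\<^sup>2 * sqnorm N (yv \<omega> l)) ^ q) \<partial>gauss_space N)
      = (\<integral>\<^sup>+\<omega>. ennreal (?s \<omega> * ip N (yv \<omega> i) (Delta N (yv \<omega>) l) ^ (2 * q)) \<partial>gauss_space N)"
    by (simp add: power_mult_distrib power_mult[symmetric] mult.commute)
  also have "\<dots> \<le> ennreal (?G q) * (\<integral>\<^sup>+\<omega>. ennreal (?s \<omega> * ?d \<omega>) \<partial>gauss_space N)"
    using l i ignores s_measurable by (intro Delta_coefficient_moment_le) (auto simp: sqnorm_nonneg)
  also have "\<dots> \<le> ennreal (?G q) * ennreal (?G (2 * q) * real (l - 1) ^ q * real N ^ q)"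
    by (intro mult_left_mono product) auto
  also have "\<dots> = ennreal (?G q * ?G (2 * q) * real (l - 1) ^ q * real N ^ q)"
    using gauss_moment_const_pos[of q, THEN less_imp_le] by (simp add: ennreal_mult' mult.assoc)
  finally show ?thesis .
qed

lemma coefficient_Delta_moment_le:
  assumes l: "l < i" and i: "i \<le> N" and q: "q \<ge> 1"
  shows "(\<integral>\<^sup>+\<omega>. ennreal (((ip N (yv \<omega> i) (Delta N (yv \<omega>) l))\<^sup>2 * sqnorm N (Delta N (yv \<omega>) l)) ^ q) \<partial>gauss_space N)
       \<le> ennreal (gauss_moment_const q * gauss_moment_const (2 * q) * real (l - 1) ^ (2 * q))"
proof -
  let ?G = "gauss_moment_const"
  let ?d = "\<lambda>\<omega>. sqnorm N (Delta N (yv \<omega>) l) ^ q"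
  have d_measurable: "?d \<in> borel_measurable (gauss_space N)" by measurable
  have ignores: "ignores_row N i ?d"
    by (rule ignores_row_comp[where g = "\<lambda>x. x ^ q", OF ignores_row_ip]) (use l i in \<open>auto simp: ignores_row_Delta\<close>)
  have "(\<integral>\<^sup>+\<omega>. ennreal (((ip N (yv \<omega> i) (Delta N (yv \<omega>) l))\<^sup>2 * sqnorm N (Delta N (yv \<omega>) l)) ^ q) \<partial>gauss_space N)
      = (\<integral>\<^sup>+\<omega>. ennreal (?d \<omega> * ip N (yv \<omega> i) (Delta N (yv \<omega>) l) ^ (2 * q)) \<partial>gauss_space N)"
    by (simp add: power_mult_distrib power_mult[symmetric] mult.commute)
  also have "\<dots> \<le> ennreal (?G q) * (\<integral>\<^sup>+\<omega>. ennreal (?d \<omega> * ?d \<omega>) \<partial>gauss_space N)"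
    using l i ignores d_measurable by (intro Delta_coefficient_moment_le) (auto simp: sqnorm_nonneg)
  also have "\<dots> \<le> ennreal (?G q) * ennreal (real (l - 1) ^ (2 * q) * ?G (2 * q))"
    using sqnorm_Delta_moment_le[of l N "2 * q"] l i q
    by (intro mult_left_mono) (simp_all add: power_add[symmetric] mult_2)
  also have "\<dots> = ennreal (?G q * (real (l - 1) ^ (2 * q) * ?G (2 * q)))"
    using gauss_moment_const_pos[of q, THEN less_imp_le] by (simp add: ennreal_mult')
  also have "\<dots> = ennreal (?G q * ?G (2 * q) * real (l - 1) ^ (2 * q))"
    by (simp add: mult_ac)
  finally show ?thesis .
qed

lemma orthogonal_part_moment_le:
  assumes i: "1 \<le> i" "i \<le> n" and n: "n \<le> N" and q: "q \<ge> 1"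
  shows "(\<integral>\<^sup>+\<omega>. ennreal ((2 / (real N)\<^sup>2 *
            (\<Sum>l\<in>{1..<i}. (ip N (yv \<omega> i) (Delta N (yv \<omega>) l))\<^sup>2 * sqnorm N (yv \<omega> l))) ^ q) \<partial>gauss_space N)
       \<le> ennreal (2 ^ q * (gauss_moment_const q * gauss_moment_const (2 * q)) * ((real n)\<^sup>2 / real N) ^ q)"
proof -
  let ?G = "gauss_moment_const q * gauss_moment_const (2 * q)"
  let ?c = "2 / (real N)\<^sup>2"
  have G: "?G \<ge> 0" using gauss_moment_const_pos[of q] gauss_moment_const_pos[of "2 * q"] by simp
  have bound: "(\<integral>\<^sup>+\<omega>. ennreal ((?c * (\<Sum>l\<in>{1..<i}. (ip N (yv \<omega> i) (Delta N (yv \<omega>) l))\<^sup>2 * sqnorm N (yv \<omega> l))) ^ q) \<partial>gauss_space N)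
      \<le> ennreal ((?c * real n) ^ q * (?G * real n ^ q * real N ^ q))"
  proof (rule nn_integral_power_sum_le[where f = "\<lambda>l \<omega>. (ip N (yv \<omega> i) (Delta N (yv \<omega>) l))\<^sup>2 * sqnorm N (yv \<omega> l)"])
    show "(\<lambda>\<omega>. (ip N (yv \<omega> i) (Delta N (yv \<omega>) l))\<^sup>2 * sqnorm N (yv \<omega> l)) \<in> borel_measurable (gauss_space N)" for l
      by measurable
    show "(\<integral>\<^sup>+\<omega>. ennreal (((ip N (yv \<omega> i) (Delta N (yv \<omega>) l))\<^sup>2 * sqnorm N (yv \<omega> l)) ^ q) \<partial>gauss_space N)
        \<le> ennreal (?G * real n ^ q * real N ^ q)" if l: "l \<in> {1..<i}" for l
      by (rule order_trans[OF coefficient_yv_moment_le ennreal_leI])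
         (use l i n q G in \<open>auto intro!: mult_right_mono mult_left_mono power_mono\<close>)
  qed (use i q G in \<open>auto simp: sqnorm_nonneg sum_nonneg\<close>)
  have "(?c * real n) ^ q * (?G * real n ^ q * real N ^ q) = ?G * (?c * real n * real n * real N) ^ q"
    by (simp only: power_mult_distrib mult_ac)
  also have "?c * real n * real n * real N = 2 * ((real n)\<^sup>2 / real N)"
    using i n by (simp add: power2_eq_square field_simps)
  also have "?G * (2 * ((real n)\<^sup>2 / real N)) ^ q = 2 ^ q * ?G * ((real n)\<^sup>2 / real N) ^ q"
    by (simp only: power_mult_distrib mult_ac)
  finally have "(?c * real n) ^ q * (?G * real n ^ q * real N ^ q) = 2 ^ q * ?G * ((real n)\<^sup>2 / real N) ^ q" .
  then show ?thesis using bound by (simp only:)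
qed

lemma Delta_part_moment_le:
  assumes i: "1 \<le> i" "i \<le> n" and n: "n \<le> N" and q: "q \<ge> 1"
  shows "(\<integral>\<^sup>+\<omega>. ennreal ((2 / (real N)\<^sup>2 * real (i - 1) *
            (\<Sum>l\<in>{1..<i}. (ip N (yv \<omega> i) (Delta N (yv \<omega>) l))\<^sup>2 * sqnorm N (Delta N (yv \<omega>) l))) ^ q) \<partial>gauss_space N)
       \<le> ennreal (2 ^ q * (gauss_moment_const q * gauss_moment_const (2 * q)) * ((real n)\<^sup>2 / real N) ^ (2 * q))"
proof -
  let ?G = "gauss_moment_const q * gauss_moment_const (2 * q)"
  let ?c = "2 / (real N)\<^sup>2 * real (i - 1)"
  have G: "?G \<ge> 0" using gauss_moment_const_pos[of q] gauss_moment_const_pos[of "2 * q"] by simp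
  have bound: "(\<integral>\<^sup>+\<omega>. ennreal ((?c * (\<Sum>l\<in>{1..<i}. (ip N (yv \<omega> i) (Delta N (yv \<omega>) l))\<^sup>2 * sqnorm N (Delta N (yv \<omega>) l))) ^ q) \<partial>gauss_space N)
      \<le> ennreal ((?c * real n) ^ q * (?G * real n ^ (2 * q)))"
  proof (rule nn_integral_power_sum_le[where f = "\<lambda>l \<omega>. (ip N (yv \<omega> i) (Delta N (yv \<omega>) l))\<^sup>2 * sqnorm N (Delta N (yv \<omega>) l)"])
    show "(\<lambda>\<omega>. (ip N (yv \<omega> i) (Delta N (yv \<omega>) l))\<^sup>2 * sqnorm N (Delta N (yv \<omega>) l)) \<in> borel_measurable (gauss_space N)" for l
      by measurable
    show "(\<integral>\<^sup>+\<omega>. ennreal (((ip N (yv \<omega> i) (Delta N (yv \<omega>) l))\<^sup>2 * sqnorm N (Delta N (yv \<omega>) l)) ^ q) \<partial>gauss_space N)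
        \<le> ennreal (?G * real n ^ (2 * q))" if l: "l \<in> {1..<i}" for l
      by (rule order_trans[OF coefficient_Delta_moment_le ennreal_leI])
         (use l i n q G in \<open>auto intro!: mult_left_mono power_mono\<close>)
  qed (use i q G in \<open>auto simp: sqnorm_nonneg sum_nonneg\<close>)
  have "(?c * real n) ^ q * (?G * real n ^ (2 * q)) \<le> (2 / (real N)\<^sup>2 * real n * real n) ^ q * (?G * real n ^ (2 * q))"
    using i G by (intro mult_right_mono power_mono mult_mono) auto
  also have "\<dots> = ?G * (2 / (real N)\<^sup>2 * real n * real n * (real n)\<^sup>2) ^ q"
    unfolding power_mult by (simp only: power_mult_distrib mult_ac)
  also have "2 / (real N)\<^sup>2 * real n * real n * (real n)\<^sup>2 = 2 * ((real n)\<^sup>2 / real N)\<^sup>2"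
    using i n by (simp add: power2_eq_square field_simps)
  also have "?G * (2 * ((real n)\<^sup>2 / real N)\<^sup>2) ^ q = 2 ^ q * ?G * ((real n)\<^sup>2 / real N) ^ (2 * q)"
    unfolding power_mult by (simp only: power_mult_distrib mult_ac)
  finally show ?thesis by (rule order_trans[OF bound ennreal_leI])
qed

lemma sqnorm_dd_moment_le:
  assumes "1 \<le> i" "i \<le> n" "n \<le> N" "q \<ge> 1"
  shows "(\<integral>\<^sup>+\<omega>. ennreal (sqnorm N (dd N (yv \<omega>) i) ^ q) \<partial>gauss_space N)
       \<le> ennreal (4 ^ q * (gauss_moment_const q * gauss_moment_const (2 * q))
                  * (((real n)\<^sup>2 / real N) ^ q + ((real n)\<^sup>2 / real N) ^ (2 * q)))"
proof -
  let ?G = "gauss_moment_const q * gauss_moment_const (2 * q)"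
  have G: "?G \<ge> 0" using gauss_moment_const_pos[of q] gauss_moment_const_pos[of "2 * q"] by simp
  have split: "sqnorm N (dd N (yv \<omega>) i)
      \<le> 2 / (real N)\<^sup>2 * (\<Sum>l\<in>{1..<i}. (ip N (yv \<omega> i) (Delta N (yv \<omega>) l))\<^sup>2 * sqnorm N (yv \<omega> l))
        + 2 / (real N)\<^sup>2 * real (i - 1) *
          (\<Sum>l\<in>{1..<i}. (ip N (yv \<omega> i) (Delta N (yv \<omega>) l))\<^sup>2 * sqnorm N (Delta N (yv \<omega>) l))" for \<omega>
    using sqnorm_dd_le[of N "yv \<omega>" i] by (simp only: distrib_left mult.assoc)
  have "(\<integral>\<^sup>+\<omega>. ennreal (sqnorm N (dd N (yv \<omega>) i) ^ q) \<partial>gauss_space N)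
      \<le> ennreal (2 ^ q * (2 ^ q * ?G * ((real n)\<^sup>2 / real N) ^ q + 2 ^ q * ?G * ((real n)\<^sup>2 / real N) ^ (2 * q)))"
    by (rule nn_integral_power_add_le[OF _ _ _ _ orthogonal_part_moment_le[OF assms] Delta_part_moment_le[OF assms]])
       (use G split in \<open>auto simp: sqnorm_nonneg sum_nonneg\<close>)
  also have "2 ^ q * (2 ^ q * ?G * ((real n)\<^sup>2 / real N) ^ q + 2 ^ q * ?G * ((real n)\<^sup>2 / real N) ^ (2 * q))
      = 4 ^ q * ?G * (((real n)\<^sup>2 / real N) ^ q + ((real n)\<^sup>2 / real N) ^ (2 * q))"
  proof -
    have "(4::real) ^ q = 2 ^ q * 2 ^ q" by (simp flip: power_mult_distrib)
    then show ?thesis by (simp only: algebra_simps)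
  qed
  finally show ?thesis .
qed

lemma ip_power_le: "ip N u v ^ (2 * p) \<le> sqnorm N u ^ (2 * p) + sqnorm N v ^ (2 * p)"
proof -
  let ?x = "sqnorm N u ^ p" and ?y = "sqnorm N v ^ p"
  have "ip N u v ^ (2 * p) = ((ip N u v)\<^sup>2) ^ p" by (simp add: power_mult)
  also have "\<dots> \<le> (sqnorm N u * sqnorm N v) ^ p" by (intro power_mono ip_squared_le) simp
  also have "\<dots> = ?x * ?y" by (rule power_mult_distrib)
  also have "\<dots> \<le> ?x\<^sup>2 + ?y\<^sup>2"
  proof -
    have "2 * (?x * ?y) \<le> ?x\<^sup>2 + ?y\<^sup>2" using sum_squares_bound[of ?x ?y] by (simp add: mult.assoc)
    moreover have "0 \<le> ?x * ?y" by (simp add: sqnorm_nonneg)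
    ultimately show ?thesis by linarith
  qed
  also have "\<dots> = sqnorm N u ^ (2 * p) + sqnorm N v ^ (2 * p)" by (simp add: power_even_eq)
  finally show ?thesis .
qed

lemma ip_dd_moment_le:
  assumes l: "l \<in> {1..n}" and l': "l' \<in> {1..n}" and n: "n \<le> N" and p: "p \<ge> 1"
  shows "(\<integral>\<^sup>+\<omega>. ennreal (ip N (dd N (yv \<omega>) l) (dd N (yv \<omega>) l') ^ (2 * p)) \<partial>gauss_space N)
       \<le> ennreal (2 * (4 ^ (2 * p) * (gauss_moment_const (2 * p) * gauss_moment_const (2 * (2 * p)))
                  * (((real n)\<^sup>2 / real N) ^ (2 * p) + ((real n)\<^sup>2 / real N) ^ (2 * (2 * p)))))"
proof -
  define B where "B = 4 ^ (2 * p) * (gauss_moment_const (2 * p) * gauss_moment_const (2 * (2 * p)))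
                  * (((real n)\<^sup>2 / real N) ^ (2 * p) + ((real n)\<^sup>2 / real N) ^ (2 * (2 * p)))"
  have B: "B \<ge> 0"
    unfolding B_def using gauss_moment_const_pos[of "2 * p"] gauss_moment_const_pos[of "2 * (2 * p)"] by simp
  have moment: "(\<integral>\<^sup>+\<omega>. ennreal (sqnorm N (dd N (yv \<omega>) i) ^ (2 * p)) \<partial>gauss_space N) \<le> ennreal B"
    if "i \<in> {1..n}" for i
    unfolding B_def using that n p by (intro sqnorm_dd_moment_le) auto
  have "(\<integral>\<^sup>+\<omega>. ennreal (ip N (dd N (yv \<omega>) l) (dd N (yv \<omega>) l') ^ (2 * p)) \<partial>gauss_space N)
      \<le> (\<integral>\<^sup>+\<omega>. ennreal (sqnorm N (dd N (yv \<omega>) l) ^ (2 * p)) + ennreal (sqnorm N (dd N (yv \<omega>) l') ^ (2 * p)) \<partial>gauss_space N)"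
    using ip_power_le sqnorm_nonneg
    by (intro nn_integral_mono) (simp add: ennreal_plus[symmetric] ennreal_leI del: ennreal_plus)
  also have "\<dots> = (\<integral>\<^sup>+\<omega>. ennreal (sqnorm N (dd N (yv \<omega>) l) ^ (2 * p)) \<partial>gauss_space N)
      + (\<integral>\<^sup>+\<omega>. ennreal (sqnorm N (dd N (yv \<omega>) l') ^ (2 * p)) \<partial>gauss_space N)"
    by (rule nn_integral_add) measurable
  also have "\<dots> \<le> ennreal B + ennreal B"
    using l l' by (intro add_mono moment)
  also have "\<dots> = ennreal (2 * B)"
    using B by (simp add: ennreal_plus[symmetric] del: ennreal_plus)
  finally show ?thesis unfolding B_def .
qed

lemma bigo_imp_uniform_bound:
  fixes f g :: "nat \<Rightarrow> real"
  assumes "f \<in> O(g)" and g_pos: "\<And>N. N \<ge> 1 \<Longrightarrow> g N > 0"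
  shows "\<exists>c>0. \<forall>N\<ge>1. f N \<le> c * g N"
proof -
  obtain c where c: "c > 0" and "eventually (\<lambda>N. norm (f N) \<le> c * norm (g N)) at_top"
    using assms(1) by (elim landau_o.bigE)
  then obtain N0 where N0: "\<And>N. N \<ge> N0 \<Longrightarrow> \<bar>f N\<bar> \<le> c * \<bar>g N\<bar>"
    by (auto simp: eventually_at_top_linorder)
  define c' where "c' = c + (\<Sum>M\<in>{1..<N0}. \<bar>f M\<bar> / g M)"
  have sum: "(\<Sum>M\<in>{1..<N0}. \<bar>f M\<bar> / g M) \<ge> 0"
    using g_pos by (intro sum_nonneg) (simp add: less_imp_le)
  have "f N \<le> c' * g N" if N: "N \<ge> 1" for N
  proof (cases "N \<ge> N0")
    case True
    then have "f N \<le> c * g N" using N0[OF True] g_pos[OF N] by simp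
    also have "\<dots> \<le> c' * g N" using sum g_pos[OF N] by (intro mult_right_mono) (auto simp: c'_def)
    finally show ?thesis .
  next
    case False
    then have "\<bar>f N\<bar> / g N \<le> (\<Sum>M\<in>{1..<N0}. \<bar>f M\<bar> / g M)"
      using N g_pos by (intro member_le_sum) (auto simp: less_imp_le)
    then have "\<bar>f N\<bar> \<le> c' * g N"
      using g_pos[OF N] mult_pos_pos[OF c g_pos[OF N]] by (simp add: c'_def divide_le_eq algebra_simps)
    then show ?thesis by simp
  qed
  moreover have "c' > 0" using c sum by (simp add: c'_def)
  ultimately show ?thesis by blast
qed

lemma sqrt_ratio_le_powr_if_bigo:
  fixes k :: "nat \<Rightarrow> nat"
  assumes "(\<lambda>N. real (k N)) \<in> O(\<lambda>N. real N powr (1/2 - \<delta>))"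
  shows "\<exists>c>0. \<forall>N\<ge>1. real (k N) / sqrt (real N) \<le> c * real N powr (- \<delta>)"
proof -
  obtain c where "c > 0" and k: "\<forall>N\<ge>1. real (k N) \<le> c * real N powr (1/2 - \<delta>)"
    using bigo_imp_uniform_bound[OF assms] by auto
  have "real (k N) / sqrt (real N) \<le> c * real N powr (- \<delta>)" if "N \<ge> 1" for N
  proof -
    have "sqrt (real N) = real N powr (1/2)" using that by (simp add: powr_half_sqrt)
    then show ?thesis using k that by (simp add: divide_le_eq powr_add[symmetric] mult.assoc)
  qed
  with \<open>c > 0\<close> show ?thesis by blast
qed

lemma power_le_powr_if_le_powr:
  fixes x :: real
  assumes "0 \<le> r" "r \<le> c * x powr a" "x > 0"
  shows "r ^ m \<le> c ^ m * x powr (real m * a)"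
proof -
  have "r ^ m \<le> (c * x powr a) ^ m" using assms by (intro power_mono) auto
  also have "\<dots> = c ^ m * x powr (real m * a)" using assms(3) by (simp add: power_mult_distrib powr_power)
  finally show ?thesis .
qed

lemma ip_dd_moment_le_rate:
  assumes "l \<in> {1..n}" "l' \<in> {1..n}" "n \<le> N" "p \<ge> 1"
    and rate: "real n / sqrt (real N) \<le> c * real N powr (- \<delta>)" and "\<delta> \<ge> 0" "c \<ge> 0"
  shows "(\<integral>\<^sup>+\<omega>. ennreal (ip N (dd N (yv \<omega>) l) (dd N (yv \<omega>) l') ^ (2 * p)) \<partial>gauss_space N)
       \<le> ennreal (2 * 4 ^ (2 * p) * (gauss_moment_const (2 * p) * gauss_moment_const (2 * (2 * p)))
                  * (1 + c ^ (4 * p)) * (real n / sqrt (real N)) ^ (4 * p))"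
proof -
  let ?R = "real n / sqrt (real N)"
  let ?G = "gauss_moment_const (2 * p) * gauss_moment_const (2 * (2 * p))"
  have G: "?G \<ge> 0" using gauss_moment_const_pos[of "2 * p"] gauss_moment_const_pos[of "2 * (2 * p)"] by simp
  have "1 \<le> N" using assms(1,3) by simp
  then have "c * real N powr (- \<delta>) \<le> c"
    using assms(6,7) by (intro mult_left_le) (auto simp: powr_minus_divide ge_one_powr_ge_zero)
  with rate have R_c: "?R \<le> c" by linarith
  have "(real n)\<^sup>2 / real N = ?R\<^sup>2" by (simp add: power_divide)
  then have "(\<integral>\<^sup>+\<omega>. ennreal (ip N (dd N (yv \<omega>) l) (dd N (yv \<omega>) l') ^ (2 * p)) \<partial>gauss_space N)
      \<le> ennreal (2 * (4 ^ (2 * p) * ?G * ((?R\<^sup>2) ^ (2 * p) + (?R\<^sup>2) ^ (2 * (2 * p)))))"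
    using ip_dd_moment_le[OF assms(1-4)] by (simp only:)
  also have "\<dots> \<le> ennreal (2 * 4 ^ (2 * p) * ?G * (1 + c ^ (4 * p)) * ?R ^ (4 * p))"
  proof (rule ennreal_leI)
    have R4: "(?R\<^sup>2) ^ (2 * p) = ?R ^ (4 * p)"
      by (simp flip: power_mult)
    have "(?R\<^sup>2) ^ (2 * p) + (?R\<^sup>2) ^ (2 * (2 * p)) = (1 + ?R ^ (4 * p)) * ?R ^ (4 * p)"
      unfolding power_even_eq[of "?R\<^sup>2" "2 * p"] R4 by (simp add: power2_eq_square algebra_simps)
    also have "\<dots> \<le> (1 + c ^ (4 * p)) * ?R ^ (4 * p)"
      using R_c by (intro mult_right_mono add_left_mono power_mono) auto
    finally have "2 * 4 ^ (2 * p) * ?G * ((?R\<^sup>2) ^ (2 * p) + (?R\<^sup>2) ^ (2 * (2 * p)))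
        \<le> 2 * 4 ^ (2 * p) * ?G * ((1 + c ^ (4 * p)) * ?R ^ (4 * p))"
      using G by (intro mult_left_mono) auto
    then show "2 * (4 ^ (2 * p) * ?G * ((?R\<^sup>2) ^ (2 * p) + (?R\<^sup>2) ^ (2 * (2 * p))))
        \<le> 2 * 4 ^ (2 * p) * ?G * (1 + c ^ (4 * p)) * ?R ^ (4 * p)"
      by (simp only: mult.assoc)
  qed
  finally show ?thesis .
qed

theorem lemma3p5:
  fixes \<delta> :: real and k :: "nat \<Rightarrow> nat" and p :: nat
  assumes "\<delta> > 0"
    and "(\<lambda>N. real (k N)) \<in> O(\<lambda>N. real N powr (1/2 - \<delta>))"
    and "\<forall>N. k N \<le> N"
    and "p \<ge> 1"
  shows "\<exists>C. \<forall>N. \<forall>l\<in>{1..k N}. \<forall>l'\<in>{1..k N}.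
           (\<integral>\<^sup>+\<omega>. ennreal ((ip N (dd N (yv \<omega>) l) (dd N (yv \<omega>) l')) ^ (2 * p)) \<partial>gauss_space N)
             \<le> ennreal (C * (real (k N) / sqrt (real N)) ^ (4 * p))
           \<and> (\<integral>\<^sup>+\<omega>. ennreal ((ip N (dd N (yv \<omega>) l) (dd N (yv \<omega>) l')) ^ (2 * p)) \<partial>gauss_space N)
             \<le> ennreal (C * real N powr (- 4 * real p * \<delta>))"
proof -
  obtain c where c: "c > 0" and rate: "\<And>N. N \<ge> 1 \<Longrightarrow> real (k N) / sqrt (real N) \<le> c * real N powr (- \<delta>)"
    using sqrt_ratio_le_powr_if_bigo[OF assms(2)] by auto
  define K where "K = 2 * 4 ^ (2 * p) * (gauss_moment_const (2 * p) * gauss_moment_const (2 * (2 * p)))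
                      * (1 + c ^ (4 * p))"
  have K: "K \<ge> 0" using gauss_moment_const_pos c unfolding K_def by (simp add: less_imp_le)
  have "(\<integral>\<^sup>+\<omega>. ennreal (ip N (dd N (yv \<omega>) l) (dd N (yv \<omega>) l') ^ (2 * p)) \<partial>gauss_space N)
          \<le> ennreal (K * (1 + c ^ (4 * p)) * (real (k N) / sqrt (real N)) ^ (4 * p))
        \<and> (\<integral>\<^sup>+\<omega>. ennreal (ip N (dd N (yv \<omega>) l) (dd N (yv \<omega>) l') ^ (2 * p)) \<partial>gauss_space N)
          \<le> ennreal (K * (1 + c ^ (4 * p)) * real N powr (- 4 * real p * \<delta>))"
    if l: "l \<in> {1..k N}" and l': "l' \<in> {1..k N}" for N l l'
  proof -
    let ?R = "real (k N) / sqrt (real N)"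
    have kN: "k N \<le> N" using assms(3) by simp
    with l have N: "N \<ge> 1" by simp
    from ip_dd_moment_le_rate[OF l l' kN assms(4) rate[OF N]] assms(1) c
    have bound: "(\<integral>\<^sup>+\<omega>. ennreal (ip N (dd N (yv \<omega>) l) (dd N (yv \<omega>) l') ^ (2 * p)) \<partial>gauss_space N)
        \<le> ennreal (K * ?R ^ (4 * p))" unfolding K_def by simp
    have "?R ^ (4 * p) \<le> c ^ (4 * p) * real N powr (- 4 * real p * \<delta>)"
      using power_le_powr_if_le_powr[OF _ rate[OF N], of "4 * p"] N by (simp add: mult_ac)
    also have "\<dots> \<le> (1 + c ^ (4 * p)) * real N powr (- 4 * real p * \<delta>)"
      by (intro mult_right_mono) auto
    finally have "K * ?R ^ (4 * p) \<le> K * (1 + c ^ (4 * p)) * real N powr (- 4 * real p * \<delta>)"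
      using K by (simp add: mult.assoc mult_left_mono)
    moreover have "K * ?R ^ (4 * p) \<le> K * (1 + c ^ (4 * p)) * ?R ^ (4 * p)"
      using K c by (intro mult_right_mono) (auto simp: mult_le_cancel_left1)
    ultimately show ?thesis
      using order_trans[OF bound ennreal_leI] by blast
  qed
  then show ?thesis by blast
qed

end
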